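(* Let $(E,\langle\cdot,\cdot\rangle,\rho,\circ)$ be a pre-Courant algebroid over $M$ with Jacobiator $J$. Consider the complex $V_1=\Gamma(\operatorname{Ker}(\rho))\xrightarrow{\ i\ }V_0=\Gamma(E)$ with $i$ the inclusion, define $l_2(e_1,e_2)=e_1\circ e_2$ for $e_1,e_2\in\Gamma(E)$, $l_2(e,\kappa)=e\circ\kappa$ and $l_2(\kappa,e)=\kappa\circ e$ for $e\in\Gamma(E)$, $\kappa\in\Gamma(\operatorname{Ker}\rho)$, and $l_3(e_1,e_2,e_3)=J(e_1,e_2,e_3)$. Then $(V_1\xrightarrow{i}V_0,l_2,l_3)$ is a Leibniz 2-algebra.
   Context: A Courant vector bundle over a smooth manifold $M$ is a vector bundle $E\to M$ with a fibrewise nondegenerate symmetric bilinear form $\langle\cdot,\cdot\rangle$ and a bundle map $\rho:E\to TM$ such that $\rho\circ\rho^*=0$, where $\rho^*:T^*M\to E^*\cong E$ is the dual of $\rho$ followed by the identification $E^*\cong E$ via $\langle\cdot,\cdot\rangle$. A pre-Courant algebroid structure on it is an $\mathbb R$-bilinear operation $\circ$ on $\Gamma(E)$ such that for all $e_1,e_2,e_3\in\Gamma(E)$: (i) $\rho(e_1\circ e_2)=[\rho(e_1),\rho(e_2)]$; (ii) $\langle e_1\circ e_1,e_2\rangle=\frac12\rho(e_2)\langle e_1,e_1\rangle$; (iii) $\rho(e_1)\langle e_2,e_3\rangle=\langle e_1\circ e_2,e_3\rangle+\langle e_2,e_1\circ e_3\rangle$. The Jacobiator is $J(e_1,e_2,e_3)=e_1\circ(e_2\circ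 e_3)-(e_1\circ e_2)\circ e_3-e_2\circ(e_1\circ e_3)$. A Leibniz 2-algebra consists of a complex of vector spaces $V_1\xrightarrow{d}V_0$, a bilinear map $l_2:V_i\times V_j\to V_{i+j}$ for $i+j\le1$, and a trilinear map $l_3:V_0\times V_0\times V_0\to V_1$ such that for all $w,x,y,z\in V_0$, $m,n\in V_1$: (a1) $d\,l_2(x,m)=l_2(x,dm)$; (a2) $d\,l_2(m,x)=l_2(dm,x)$; (a3) $l_2(dm,n)=l_2(m,dn)$; (b1) $d\,l_3(x,y,z)=l_2(x,l_2(y,z))-l_2(l_2(x,y),z)-l_2(y,l_2(x,z))$; (b2) $l_3(x,y,dm)=l_2(x,l_2(y,m))-l_2(l_2(x,y),m)-l_2(y,l_2(x,m))$; (b3) $l_3(x,dm,y)=l_2(x,l_2(m,y))-l_2(l_2(x,m),y)-l_2(m,l_2(x,y))$; (b4) $l_3(dm,x,y)=l_2(m,l_2(x,y))-l_2(l_2(m,x),y)-l_2(x,l_2(m,y))$; (c) $l_2(w,l_3(x,y,z))-l_2(x,l_3(w,y,z))+l_2(y,l_3(w,x,z))+l_2(l_3(w,x,y),z)-l_3(l_2(w,x),y,z)-l_3(x,l_2(w,y),z)-l_3(x,y,l_2(w,z))+l_3(w,l_2(x,y),z)+l_3(w,y,l_2(x,z))-l_3(w,x,l_2(y,z))=0$. *)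

theory Defs
  imports Complex_Main
begin

text \<open>
  The smooth manifold M is represented through its algebra of smooth functions,
  a commutative real algebra of type 'a (playing the role of C^\<infinity>(M)).
  Vector fields on M are represented as derivations of this algebra
  (X(M) = Der(C^\<infinity>(M))), with the Lie bracket given by the commutator.
  The space of sections Gamma(E) is a real vector space of type 'e, which is a
  module over the function algebra via sm.
\<close>

definition is_derivation :: "('a::{comm_ring_1,real_algebra_1} \<Rightarrow> 'a) \<Rightarrow> bool" where
  "is_derivation X \<longleftrightarrow>
     (\<forall>r f g. X (r *\<^sub>R f + g) = r *\<^sub>R X f + X g) \<and>
     (\<forall>f g. X (f * g) = f * X g + g * X f)"

definition vf_bracket :: "('a::{comm_ring_1,real_algebra_1} \<Rightarrow> 'a) \<Rightarrow> ('a \<Rightarrow> 'a) \<Rightarrow> ('a \<Rightarrow> 'a)" where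
  "vf_bracket X Y = (\<lambda>f. X (Y f) - Y (X f))"

definition module_action :: "('a::{comm_ring_1,real_algebra_1} \<Rightarrow> 'e::real_vector \<Rightarrow> 'e) \<Rightarrow> bool" where
  "module_action sm \<longleftrightarrow>
     (\<forall>f g e. sm (f + g) e = sm f e + sm g e) \<and>
     (\<forall>f e1 e2. sm f (e1 + e2) = sm f e1 + sm f e2) \<and>
     (\<forall>f g e. sm (f * g) e = sm f (sm g e)) \<and>
     (\<forall>r e. sm (of_real r) e = r *\<^sub>R e)"

text \<open>C^\<infinity>(M)-linear maps Gamma(E) -> C^\<infinity>(M) (sections of the dual bundle).\<close>
definition module_linear_form ::
  "('a::{comm_ring_1,real_algebra_1} \<Rightarrow> 'e::real_vector \<Rightarrow> 'e) \<Rightarrow> ('e \<Rightarrow> 'a) \<Rightarrow> bool" where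
  "module_linear_form sm \<phi> \<longleftrightarrow> (\<forall>f e1 e2. \<phi> (sm f e1 + e2) = f * \<phi> e1 + \<phi> e2)"

text \<open>Courant vector bundle: pairing symmetric, C^\<infinity>(M)-bilinear, nondegenerate
  (Gamma(E) identified with Gamma(E^*) via the pairing); anchor rho is
  C^\<infinity>(M)-linear with values in vector fields; rho \<circ> rho^* = 0, where
  rho^*(dg) is the section e with \<langle>e,x\<rangle> = rho(x) g for all x.\<close>
definition courant_vector_bundle ::
  "('a::{comm_ring_1,real_algebra_1} \<Rightarrow> 'e::real_vector \<Rightarrow> 'e) \<Rightarrow> ('e \<Rightarrow> 'e \<Rightarrow> 'a) \<Rightarrow> ('e \<Rightarrow> ('a \<Rightarrow> 'a)) \<Rightarrow> bool" where
  "courant_vector_bundle sm pair rho \<longleftrightarrow>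
     module_action sm \<and>
     (\<forall>e1 e2. pair e1 e2 = pair e2 e1) \<and>
     (\<forall>e. module_linear_form sm (pair e)) \<and>
     (\<forall>\<phi>. module_linear_form sm \<phi> \<longrightarrow> (\<exists>!e. \<forall>x. pair e x = \<phi> x)) \<and>
     (\<forall>e. is_derivation (rho e)) \<and>
     (\<forall>f e1 e2. rho (sm f e1 + e2) = (\<lambda>g. f * rho e1 g + rho e2 g)) \<and>
     (\<forall>g e. (\<forall>x. pair e x = rho x g) \<longrightarrow> rho e = (\<lambda>_. 0))"

definition pre_courant_algebroid ::
  "('a::{comm_ring_1,real_algebra_1} \<Rightarrow> 'e::real_vector \<Rightarrow> 'e) \<Rightarrow> ('e \<Rightarrow> 'e \<Rightarrow> 'a) \<Rightarrow> ('e \<Rightarrow> ('a \<Rightarrow> 'a))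
     \<Rightarrow> ('e \<Rightarrow> 'e \<Rightarrow> 'e) \<Rightarrow> bool" where
  "pre_courant_algebroid sm pair rho circ \<longleftrightarrow>
     courant_vector_bundle sm pair rho \<and>
     (\<forall>r e1 e2 e3. circ (r *\<^sub>R e1 + e2) e3 = r *\<^sub>R circ e1 e3 + circ e2 e3) \<and>
     (\<forall>r e1 e2 e3. circ e1 (r *\<^sub>R e2 + e3) = r *\<^sub>R circ e1 e2 + circ e1 e3) \<and>
     (\<forall>e1 e2. rho (circ e1 e2) = vf_bracket (rho e1) (rho e2)) \<and>
     (\<forall>e1 e2. pair (circ e1 e1) e2 = (1/2) *\<^sub>R rho e2 (pair e1 e1)) \<and>
     (\<forall>e1 e2 e3. rho e1 (pair e2 e3) = pair (circ e1 e2) e3 + pair e2 (circ e1 e3))"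

definition jacobiator :: "('e::real_vector \<Rightarrow> 'e \<Rightarrow> 'e) \<Rightarrow> 'e \<Rightarrow> 'e \<Rightarrow> 'e \<Rightarrow> 'e" where
  "jacobiator circ e1 e2 e3 = circ e1 (circ e2 e3) - circ (circ e1 e2) e3 - circ e2 (circ e1 e3)"

text \<open>V1 and V0 are real vector spaces, given as subspaces of ambient real vector
  spaces. The bilinear map l2 : V_i x V_j -> V_{i+j} (i+j \<le> 1) is given by its three
  components l2_00 : V0 x V0 -> V0, l2_01 : V0 x V1 -> V1, l2_10 : V1 x V0 -> V1.\<close>

definition leibniz_2_algebra ::
  "'m::real_vector set \<Rightarrow> 'n::real_vector set \<Rightarrow> ('m \<Rightarrow> 'n)
   \<Rightarrow> ('n \<Rightarrow> 'n \<Rightarrow> 'n) \<Rightarrow> ('n \<Rightarrow> 'm \<Rightarrow> 'm) \<Rightarrow> ('m \<Rightarrow> 'n \<Rightarrow> 'm) \<Rightarrow> ('n \<Rightarrow> 'n \<Rightarrow> 'n \<Rightarrow> 'm) \<Rightarrow> bool" where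
  "leibniz_2_algebra V1 V0 d l2_00 l2_01 l2_10 l3 \<longleftrightarrow>
     subspace V1 \<and> subspace V0 \<and>
     \<comment> \<open>d is a linear map V1 -> V0\<close>
     (\<forall>m\<in>V1. d m \<in> V0) \<and>
     (\<forall>r. \<forall>m\<in>V1. \<forall>n\<in>V1. d (r *\<^sub>R m + n) = r *\<^sub>R d m + d n) \<and>
     \<comment> \<open>l2 well-typed and bilinear\<close>
     (\<forall>x\<in>V0. \<forall>y\<in>V0. l2_00 x y \<in> V0) \<and>
     (\<forall>x\<in>V0. \<forall>m\<in>V1. l2_01 x m \<in> V1) \<and>
     (\<forall>m\<in>V1. \<forall>x\<in>V0. l2_10 m x \<in> V1) \<and>
     (\<forall>r. \<forall>x\<in>V0. \<forall>y\<in>V0. \<forall>z\<in>V0. l2_00 (r *\<^sub>R x + y) z = r *\<^sub>R l2_00 x z + l2_00 y z) \<and>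
     (\<forall>r. \<forall>x\<in>V0. \<forall>y\<in>V0. \<forall>z\<in>V0. l2_00 x (r *\<^sub>R y + z) = r *\<^sub>R l2_00 x y + l2_00 x z) \<and>
     (\<forall>r. \<forall>x\<in>V0. \<forall>y\<in>V0. \<forall>m\<in>V1. l2_01 (r *\<^sub>R x + y) m = r *\<^sub>R l2_01 x m + l2_01 y m) \<and>
     (\<forall>r. \<forall>x\<in>V0. \<forall>m\<in>V1. \<forall>n\<in>V1. l2_01 x (r *\<^sub>R m + n) = r *\<^sub>R l2_01 x m + l2_01 x n) \<and>
     (\<forall>r. \<forall>m\<in>V1. \<forall>n\<in>V1. \<forall>x\<in>V0. l2_10 (r *\<^sub>R m + n) x = r *\<^sub>R l2_10 m x + l2_10 n x) \<and>
     (\<forall>r. \<forall>m\<in>V1. \<forall>x\<in>V0. \<forall>y\<in>V0. l2_10 m (r *\<^sub>R x + y) = r *\<^sub>R l2_10 m x + l2_10 m y) \<and>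
     \<comment> \<open>l3 well-typed and trilinear\<close>
     (\<forall>x\<in>V0. \<forall>y\<in>V0. \<forall>z\<in>V0. l3 x y z \<in> V1) \<and>
     (\<forall>r. \<forall>x\<in>V0. \<forall>x'\<in>V0. \<forall>y\<in>V0. \<forall>z\<in>V0. l3 (r *\<^sub>R x + x') y z = r *\<^sub>R l3 x y z + l3 x' y z) \<and>
     (\<forall>r. \<forall>x\<in>V0. \<forall>y\<in>V0. \<forall>y'\<in>V0. \<forall>z\<in>V0. l3 x (r *\<^sub>R y + y') z = r *\<^sub>R l3 x y z + l3 x y' z) \<and>
     (\<forall>r. \<forall>x\<in>V0. \<forall>y\<in>V0. \<forall>z\<in>V0. \<forall>z'\<in>V0. l3 x y (r *\<^sub>R z + z') = r *\<^sub>R l3 x y z + l3 x y z') \<and>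
     \<comment> \<open>(a1)-(a3)\<close>
     (\<forall>x\<in>V0. \<forall>m\<in>V1. d (l2_01 x m) = l2_00 x (d m)) \<and>
     (\<forall>m\<in>V1. \<forall>x\<in>V0. d (l2_10 m x) = l2_00 (d m) x) \<and>
     (\<forall>m\<in>V1. \<forall>n\<in>V1. l2_01 (d m) n = l2_10 m (d n)) \<and>
     \<comment> \<open>(b1)-(b4)\<close>
     (\<forall>x\<in>V0. \<forall>y\<in>V0. \<forall>z\<in>V0.
        d (l3 x y z) = l2_00 x (l2_00 y z) - l2_00 (l2_00 x y) z - l2_00 y (l2_00 x z)) \<and>
     (\<forall>x\<in>V0. \<forall>y\<in>V0. \<forall>m\<in>V1.
        l3 x y (d m) = l2_01 x (l2_01 y m) - l2_01 (l2_00 x y) m - l2_01 y (l2_01 x m)) \<and>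
     (\<forall>x\<in>V0. \<forall>m\<in>V1. \<forall>y\<in>V0.
        l3 x (d m) y = l2_01 x (l2_10 m y) - l2_10 (l2_01 x m) y - l2_10 m (l2_00 x y)) \<and>
     (\<forall>m\<in>V1. \<forall>x\<in>V0. \<forall>y\<in>V0.
        l3 (d m) x y = l2_10 m (l2_00 x y) - l2_10 (l2_10 m x) y - l2_01 x (l2_10 m y)) \<and>
     \<comment> \<open>(c)\<close>
     (\<forall>w\<in>V0. \<forall>x\<in>V0. \<forall>y\<in>V0. \<forall>z\<in>V0.
        l2_01 w (l3 x y z) - l2_01 x (l3 w y z) + l2_01 y (l3 w x z) + l2_10 (l3 w x y) z
        - l3 (l2_00 w x) y z - l3 x (l2_00 w y) z - l3 x y (l2_00 w z)
        + l3 w (l2_00 x y) z + l3 w y (l2_00 x z) - l3 w x (l2_00 y z) = 0)"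

end

theory Submission
  imports Defs
begin

text \<open>The anchor is linear and maps the bracket to the commutator of vector fields, so
  its kernel is a subspace which is a two-sided ideal and contains every Jacobiator, since
  commutators satisfy the Jacobi identity. The remaining axioms are either tautological (the
  differential is the inclusion and all components of l2 are the same operation) or, like
  axiom (c), identities satisfied by the Jacobiator of an arbitrary bilinear operation.\<close>

lemma bilinear_op_simps:
  fixes circ :: "'e::real_vector \<Rightarrow> 'e \<Rightarrow> 'e"
  assumes left: "\<forall>r e1 e2 e3. circ (r *\<^sub>R e1 + e2) e3 = r *\<^sub>R circ e1 e3 + circ e2 e3"
    and right: "\<forall>r e1 e2 e3. circ e1 (r *\<^sub>R e2 + e3) = r *\<^sub>R circ e1 e2 + circ e1 e3"
  shows "circ (a + b) c = circ a c + circ b c"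
    and "circ a (b + c) = circ a b + circ a c"
    and "circ (a - b) c = circ a c - circ b c"
    and "circ a (b - c) = circ a b - circ a c"
    and "circ (r *\<^sub>R a) c = r *\<^sub>R circ a c"
    and "circ a (r *\<^sub>R c) = r *\<^sub>R circ a c"
proof -
  have zero_left: "circ 0 c = 0" for c using left[rule_format, of 1 0 0 c] by simp
  have zero_right: "circ a 0 = 0" for a using right[rule_format, of a 1 0 0] by simp
  show "circ (a + b) c = circ a c + circ b c" using left[rule_format, of 1 a b c] by simp
  show "circ a (b + c) = circ a b + circ a c" using right[rule_format, of a 1 b c] by simp
  show "circ (a - b) c = circ a c - circ b c" using left[rule_format, of "-1" b a c] by simp
  show "circ a (b - c) = circ a b - circ a c" using right[rule_format, of a "-1" c b] by simp
  show "circ (r *\<^sub>R a) c = r *\<^sub>R circ a c" using left[rule_format, of r a 0 c] zero_left by simp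
  show "circ a (r *\<^sub>R c) = r *\<^sub>R circ a c" using right[rule_format, of a r c 0] zero_right by simp
qed

lemma jacobiator_cocycle:
  fixes circ :: "'e::real_vector \<Rightarrow> 'e \<Rightarrow> 'e"
  assumes "\<forall>r e1 e2 e3. circ (r *\<^sub>R e1 + e2) e3 = r *\<^sub>R circ e1 e3 + circ e2 e3"
    and "\<forall>r e1 e2 e3. circ e1 (r *\<^sub>R e2 + e3) = r *\<^sub>R circ e1 e2 + circ e1 e3"
  shows "circ w (jacobiator circ x y z) - circ x (jacobiator circ w y z)
           + circ y (jacobiator circ w x z) + circ (jacobiator circ w x y) z
           - jacobiator circ (circ w x) y z - jacobiator circ x (circ w y) z
           - jacobiator circ x y (circ w z) + jacobiator circ w (circ x y) z
           + jacobiator circ w y (circ x z) - jacobiator circ w x (circ y z) = 0"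
  by (simp add: jacobiator_def bilinear_op_simps[OF assms] algebra_simps)

lemma derivation_diff:
  assumes "is_derivation X"
  shows "X (f - g) = X f - X g"
proof -
  have "X ((-1) *\<^sub>R g + f) = (-1) *\<^sub>R X g + X f"
    using assms unfolding is_derivation_def by blast
  then show ?thesis by (simp add: algebra_simps)
qed

lemma anchor_scaleR_add:
  assumes "courant_vector_bundle sm pair rho"
  shows "rho (r *\<^sub>R e1 + e2) = (\<lambda>g. of_real r * rho e1 g + rho e2 g)"
proof -
  have "sm (of_real r) e1 = r *\<^sub>R e1"
    using assms unfolding courant_vector_bundle_def module_action_def by blast
  moreover have "rho (sm (of_real r) e1 + e2) = (\<lambda>g. of_real r * rho e1 g + rho e2 g)"
    using assms unfolding courant_vector_bundle_def by blast
  ultimately show ?thesis by simp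
qed

lemma anchor_diff:
  assumes "courant_vector_bundle sm pair rho"
  shows "rho (e1 - e2) = (\<lambda>g. rho e1 g - rho e2 g)"
  using anchor_scaleR_add[OF assms, of "-1" e2 e1] by (simp add: algebra_simps)

lemma subspace_anchor_kernel:
  assumes "courant_vector_bundle sm pair rho"
  shows "subspace {\<kappa>. rho \<kappa> = (\<lambda>_. 0)}"
proof -
  note lin = anchor_scaleR_add[OF assms]
  have "rho 0 = (\<lambda>_. 0)" using lin[of "-1" 0 0] by simp
  then show ?thesis
    unfolding subspace_def using lin[of 1] lin[of _ _ 0] by auto
qed

lemma anchor_jacobiator:
  assumes "pre_courant_algebroid sm pair rho circ"
  shows "rho (jacobiator circ x y z) = (\<lambda>_. 0)"
proof -
  have cvb: "courant_vector_bundle sm pair rho"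
    and hom: "\<And>e1 e2. rho (circ e1 e2) = vf_bracket (rho e1) (rho e2)"
    using assms unfolding pre_courant_algebroid_def by auto
  have der: "\<And>e. is_derivation (rho e)"
    using cvb unfolding courant_vector_bundle_def by auto
  show ?thesis
    unfolding jacobiator_def anchor_diff[OF cvb] hom vf_bracket_def
    by (simp add: derivation_diff[OF der])
qed

lemma anchor_kernel_ideal:
  assumes "pre_courant_algebroid sm pair rho circ" and "rho \<kappa> = (\<lambda>_. 0)"
  shows "rho (circ x \<kappa>) = (\<lambda>_. 0)" and "rho (circ \<kappa> x) = (\<lambda>_. 0)"
proof -
  have hom: "\<And>e1 e2. rho (circ e1 e2) = vf_bracket (rho e1) (rho e2)"
    and der: "\<And>e. is_derivation (rho e)"
    using assms(1) unfolding pre_courant_algebroid_def courant_vector_bundle_def by auto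
  show "rho (circ x \<kappa>) = (\<lambda>_. 0)" "rho (circ \<kappa> x) = (\<lambda>_. 0)"
    using assms(2) derivation_diff[OF der, of x 0 0] by (simp_all add: hom vf_bracket_def)
qed

theorem theorem4p1:
  fixes sm :: "'a::{comm_ring_1,real_algebra_1} \<Rightarrow> 'e::real_vector \<Rightarrow> 'e"
    and pair :: "'e \<Rightarrow> 'e \<Rightarrow> 'a"
    and rho :: "'e \<Rightarrow> ('a \<Rightarrow> 'a)"
    and circ :: "'e \<Rightarrow> 'e \<Rightarrow> 'e"
  assumes "pre_courant_algebroid sm pair rho circ"
  shows "leibniz_2_algebra {\<kappa>. rho \<kappa> = (\<lambda>_. 0)} (UNIV :: 'e set) (\<lambda>\<kappa>. \<kappa>)
           circ circ circ (jacobiator circ)"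
proof -
  have cvb: "courant_vector_bundle sm pair rho"
    and left: "\<forall>r e1 e2 e3. circ (r *\<^sub>R e1 + e2) e3 = r *\<^sub>R circ e1 e3 + circ e2 e3"
    and right: "\<forall>r e1 e2 e3. circ e1 (r *\<^sub>R e2 + e3) = r *\<^sub>R circ e1 e2 + circ e1 e3"
    using assms unfolding pre_courant_algebroid_def by auto
  show ?thesis
    unfolding leibniz_2_algebra_def
    using subspace_anchor_kernel[OF cvb] anchor_jacobiator[OF assms] anchor_kernel_ideal[OF assms]
      jacobiator_cocycle[OF left right] left right
    by (simp add: bilinear_op_simps[OF left right] jacobiator_def scaleR_diff_right)
qed

end
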